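(* Assume the setting of the context with $g$ logconcave. Then: (a) The coverage satisfies $C(\theta)=G(x_1(\theta))$ for $\theta\in[0,a]$; $C(\theta)=G(x_1(\theta))-G(x_0(\theta))$ for $\theta\in(a,2d_0]$; $C(\theta)=G(x_1(\theta))-G(x_2(\theta))$ for $\theta\in(2d_0,\infty)$, and the functions $x_0,x_1,x_2$ satisfy (i) $G(x_0(\theta))=\alpha\,G(x_0(\theta)+\theta)$ for $\theta\in(a,2d_0]$; (ii) $2G(x_1(\theta))-1=(1-\alpha)G(x_1(\theta)+\theta)$ for $\theta\ge0$; (iii) $1-2G(x_2(\theta))=(1-\alpha)G(x_2(\theta)+\theta)$ for $\theta\ge 2d_0$. (b) $x_0$ and $x_1$ are nondecreasing and $x_2$ is nonincreasing on their domains; $x_0(2d_0)=x_2(2d_0)=-d_0$; $x_0(d_1)=-d_1$ whenever $d_1>a$; $\lim_{\theta\to0^+}x_1(\theta)=d_0$, $\lim_{\theta\to\infty}x_1(\theta)=d_1$, and $\lim_{\theta\to\infty}x_2(\theta)=-d_1$.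
   Context: Let $g$ be a probability density on $\mathbb{R}$, unimodal and symmetric about $0$ (i.e. $g(z)=g(-z)$ and $g$ nonincreasing on $[0,\infty)$), and logconcave ($\log g$ concave on its support), with cdf $G$ and quantile function $G^{-1}(t)=\inf\{x:G(x)\ge t\}$. Let $X$ have density $g(x-\theta)$, $\theta\ge0$, and $P_\theta$ the corresponding probability. Fix $\alpha\in(0,1)$, and set $d_0=G^{-1}(\tfrac1{1+\alpha})$, $d_1=G^{-1}(1-\tfrac\alpha2)$. The HPD credible interval (prior $1_{[0,\infty)}(\theta)$, credibility $1-\alpha$) is $[l(X),u(X)]$ with $l(x)=\{x-G^{-1}(\tfrac12+\tfrac{1-\alpha}2G(x))\}1_{(d_0,\infty)}(x)$, $u(x)=x-G^{-1}(\alpha G(x))$ for $x\le d_0$ and $u(x)=x+G^{-1}(\tfrac12+\tfrac{1-\alpha}2G(x))$ for $x>d_0$. The frequentist coverage is $C(\theta)=P_\theta(l(X)\le\theta\le u(X))$, and $a=\lim_{x\to-\infty}u(x)$. Define $u^{-1}(\theta)=\inf\{x:\theta\le u(x)\}$, $l^{-1}(\theta)=\sup\{x:\theta\ge l(x)\}$, and $x_0(\theta)=u^{-1}(\theta)-\theta$ for $\theta\in(a,2d_0]$, $x_1(\theta)=l^{-1}(\theta)-\theta$ for $\theta\ge0$, $x_2(\theta)=u^{-1}(\theta)-\theta$ for $\theta\ge2d_0$. *)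

theory Defs
  imports "HOL-Analysis.Analysis"
begin

definition cdf :: "(real \<Rightarrow> real) \<Rightarrow> real \<Rightarrow> real" where
  "cdf g x = (LINT t:{..x}|lborel. g t)"

definition qf :: "(real \<Rightarrow> real) \<Rightarrow> real \<Rightarrow> real" where
  "qf g t = Inf {x. t \<le> cdf g x}"

definition d0 :: "(real \<Rightarrow> real) \<Rightarrow> real \<Rightarrow> real" where
  "d0 g \<alpha> = qf g (1 / (1 + \<alpha>))"

definition d1 :: "(real \<Rightarrow> real) \<Rightarrow> real \<Rightarrow> real" where
  "d1 g \<alpha> = qf g (1 - \<alpha> / 2)"

definition lo :: "(real \<Rightarrow> real) \<Rightarrow> real \<Rightarrow> real \<Rightarrow> real" where
  "lo g \<alpha> x = (if d0 g \<alpha> < x then x - qf g (1/2 + (1 - \<alpha>) / 2 * cdf g x) else 0)"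

definition up :: "(real \<Rightarrow> real) \<Rightarrow> real \<Rightarrow> real \<Rightarrow> real" where
  "up g \<alpha> x = (if x \<le> d0 g \<alpha> then x - qf g (\<alpha> * cdf g x)
                 else x + qf g (1/2 + (1 - \<alpha>) / 2 * cdf g x))"

definition coverage :: "(real \<Rightarrow> real) \<Rightarrow> real \<Rightarrow> real \<Rightarrow> real" where
  "coverage g \<alpha> \<theta> = measure (density lborel (\<lambda>x. ennreal (g (x - \<theta>))))
       {x. lo g \<alpha> x \<le> \<theta> \<and> \<theta> \<le> up g \<alpha> x}"

definition up_inv :: "(real \<Rightarrow> real) \<Rightarrow> real \<Rightarrow> real \<Rightarrow> real" where
  "up_inv g \<alpha> \<theta> = Inf {x. \<theta> \<le> up g \<alpha> x}"

definition lo_inv :: "(real \<Rightarrow> real) \<Rightarrow> real \<Rightarrow> real \<Rightarrow> real" where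
  "lo_inv g \<alpha> \<theta> = Sup {x. \<theta> \<ge> lo g \<alpha> x}"

definition xx0 :: "(real \<Rightarrow> real) \<Rightarrow> real \<Rightarrow> real \<Rightarrow> real" where
  "xx0 g \<alpha> \<theta> = up_inv g \<alpha> \<theta> - \<theta>"

definition xx1 :: "(real \<Rightarrow> real) \<Rightarrow> real \<Rightarrow> real \<Rightarrow> real" where
  "xx1 g \<alpha> \<theta> = lo_inv g \<alpha> \<theta> - \<theta>"

definition xx2 :: "(real \<Rightarrow> real) \<Rightarrow> real \<Rightarrow> real \<Rightarrow> real" where
  "xx2 g \<alpha> \<theta> = up_inv g \<alpha> \<theta> - \<theta>"

end

theory Submission
  imports Defs
begin

(* For a positive, continuous, symmetric density the cdf G is a strictly increasing
   C^1 bijection from the reals onto (0,1) and the quantile function qf is its inverse.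
   Hence every condition "theta <= u(x)" or "l(x) <= theta" is equivalent to an
   inequality between values of G.  Log-concavity of g yields the monotone likelihood
   ratio g(x - theta)/g(x) and the monotonicity of G(x - theta)/G(x); from these the
   upper endpoint u is nondecreasing and the sets {x. l(x) <= theta} and
   {x. theta <= u(x)} (for theta > a) are closed half-lines {..l^-1(theta)} and
   {u^-1(theta)..}.  Continuity turns the defining inequalities of the endpoints
   into the equations (i)-(iii); monotonicity, the special values and the limits of
   x0, x1, x2 are read off from these equations, and the coverage is the mass of
   {..l^-1(theta)} minus that of {..<u^-1(theta)} under the shifted density.
   Finally, the existence of the finite limit a forces g > 0 everywhere, which
   places the theorem in this setting. *)

lemma isCont_less_nearby:
  fixes f :: "real \<Rightarrow> real"
  assumes "isCont f r" "f r < c"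
  shows "\<exists>d>0. \<forall>y. \<bar>y - r\<bar> < d \<longrightarrow> f y < c"
proof -
  have "eventually (\<lambda>y. f y < c) (at r)"
    using assms unfolding isCont_def by (rule order_tendstoD)
  then obtain d where d: "d > 0" "\<And>y. y \<noteq> r \<Longrightarrow> dist y r < d \<Longrightarrow> f y < c"
    unfolding eventually_at by auto
  have "\<forall>y. \<bar>y - r\<bar> < d \<longrightarrow> f y < c"
    using d assms(2) by (metis dist_real_def)
  then show ?thesis using d(1) by blast
qed

lemma isCont_less_right:
  fixes f :: "real \<Rightarrow> real"
  assumes "isCont f r" "f r < c" shows "\<exists>y>r. f y < c"
proof -
  obtain d where "d > 0" "\<forall>y. \<bar>y - r\<bar> < d \<longrightarrow> f y < c"
    using isCont_less_nearby[OF assms] by auto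
  then show ?thesis by (intro exI[of _ "r + d/2"]) auto
qed

lemma isCont_less_left:
  fixes f :: "real \<Rightarrow> real"
  assumes "isCont f r" "f r < c" shows "\<exists>y<r. f y < c"
proof -
  obtain d where "d > 0" "\<forall>y. \<bar>y - r\<bar> < d \<longrightarrow> f y < c"
    using isCont_less_nearby[OF assms] by auto
  then show ?thesis by (intro exI[of _ "r - d/2"]) auto
qed

text \<open>These identify
  the sets \<open>{x. lo x \<le> \<theta>}\<close> and \<open>{x. \<theta> \<le> up x}\<close>.\<close>

lemma closed_downset_eq_atMost:
  fixes A :: "real set"
  assumes "closed A" "x0 \<in> A" "bdd_above A" "\<And>x y. x \<in> A \<Longrightarrow> y \<le> x \<Longrightarrow> y \<in> A"
  shows "A = {..Sup A}"
proof -
  have "Sup A \<in> A" using closed_contains_Sup[OF _ assms(3,1)] assms(2) by auto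
  then show ?thesis using cSup_upper[OF _ assms(3)] assms(4) by auto
qed

lemma closed_upset_eq_atLeast:
  fixes A :: "real set"
  assumes "closed A" "x0 \<in> A" "bdd_below A" "\<And>x y. x \<in> A \<Longrightarrow> x \<le> y \<Longrightarrow> y \<in> A"
  shows "A = {Inf A..}"
proof -
  have "Inf A \<in> A" using closed_contains_Inf[OF _ assms(3,1)] assms(2) by auto
  then show ?thesis using cInf_lower[OF _ assms(3)] assms(4) by auto
qed

lemma filterlim_add_const_at_top: "filterlim (\<lambda>z::real. z + c) at_top at_top"
  using filterlim_tendsto_add_at_top[OF tendsto_const filterlim_ident, of c]
  by (simp add: add.commute)

text \<open>A positive log-concave function on the real line is continuous, because
  \<open>- ln g\<close> is convex and hence continuous.\<close>

lemma logconcave_continuous: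
  fixes g :: "real \<Rightarrow> real"
  assumes pos: "\<And>x. 0 < g x"
    and logconc: "\<And>x y t. 0 < g x \<Longrightarrow> 0 < g y \<Longrightarrow> 0 \<le> t \<Longrightarrow> t \<le> 1 \<Longrightarrow>
                    t * ln (g x) + (1 - t) * ln (g y) \<le> ln (g (t * x + (1 - t) * y))"
  shows "continuous_on UNIV g"
proof -
  have "convex_on UNIV (\<lambda>x. - ln (g x))"
  proof (rule convex_onI)
    fix t x y :: real assume t: "t > 0" "t < 1"
    have "(1-t) * ln (g x) + (1 - (1-t)) * ln (g y) \<le> ln (g ((1-t) * x + (1 - (1-t)) * y))"
      using t by (intro logconc pos) auto
    then show "- ln (g ((1 - t) *\<^sub>R x + t *\<^sub>R y)) \<le> (1 - t) * - ln (g x) + t * - ln (g y)"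
      by simp
  qed auto
  then have "continuous_on UNIV (\<lambda>x. exp (- (- ln (g x))))"
    by (intro continuous_on_exp continuous_on_minus convex_on_continuous) auto
  moreover have "(\<lambda>x. exp (- (- ln (g x)))) = g" using pos by (simp add: fun_eq_iff)
  ultimately show ?thesis by metis
qed

section \<open>Cdf and quantile function of a positive continuous symmetric density\<close>

text \<open>Everything about \<open>G = cdf g\<close> and \<open>qf g\<close> that is needed holds for a strictly
  positive, continuous, symmetric probability density; log-concavity enters later.\<close>

locale symmetric_density =
  fixes g :: "real \<Rightarrow> real"
  assumes meas [measurable]: "g \<in> borel_measurable borel"
    and integ: "integrable lborel g"
    and total: "(LINT x|lborel. g x) = 1"
    and symm: "\<And>z. g (- z) = g z"
    and pos: "\<And>x. 0 < g x"
    and cont: "continuous_on UNIV g"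
begin

text \<open>Increments of \<open>G\<close> are Henstock-Kurzweil integrals of the continuous \<open>g\<close>, which
  gives access to the fundamental theorem of calculus.\<close>

lemma set_integrable_density: "S \<in> sets borel \<Longrightarrow> set_integrable lborel S g"
  unfolding set_integrable_def by (intro integrable_mult_indicator integ) auto

lemma cdf_diff: assumes "a \<le> b" shows "cdf g b - cdf g a = integral {a..b} g"
proof -
  have "{..b} = {..a} \<union> {a<..b}" using assms by auto
  then have "cdf g b = cdf g a + (LINT t:{a<..b}|lborel. g t)"
    unfolding cdf_def by (simp only:) (rule set_integral_Un; auto intro: set_integrable_density)
  moreover have "(LINT t:{a<..b}|lborel. g t) = integral {a<..b} g"
    by (intro set_borel_integral_eq_integral set_integrable_density) auto
  moreover have "integral {a<..b} g = integral {a..b} g"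
  proof -
    have "integral {a<..b} g = integral {a<..<b} g"
      by (rule integral_spike_set) (auto intro: negligible_subset[of "{b}"])
    then show ?thesis by (simp add: integral_open_interval_real)
  qed
  ultimately show ?thesis by linarith
qed

lemma cdf_deriv: "(cdf g has_real_derivative g x) (at x)"
proof -
  have c: "continuous_on {x-1..x+1} g" using cont continuous_on_subset by blast
  have "((\<lambda>y. integral {x-1..y} g) has_real_derivative g x) (at x within {x-1..x+1})"
    by (rule integral_has_real_derivative[OF c]) auto
  then have "((\<lambda>y. integral {x-1..y} g) has_real_derivative g x) (at x)"
    by (subst (asm) at_within_interior[of x]) auto
  from DERIV_add[OF DERIV_const this]
  have d: "((\<lambda>y. cdf g (x-1) + integral {x-1..y} g) has_real_derivative g x) (at x)"
    by simp
  show ?thesis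
  proof (rule has_field_derivative_transform_within_open[OF d, of "{x-1<..<x+1}"])
    fix y assume "y \<in> {x-1<..<x+1}"
    then show "cdf g (x - 1) + integral {x - 1..y} g = cdf g y"
      using cdf_diff[of "x-1" y] by auto
  qed auto
qed

lemma cdf_shift_deriv: "((\<lambda>z. cdf g (z - \<theta>)) has_real_derivative g (z - \<theta>)) (at z)"
proof -
  have "((\<lambda>z. z - \<theta>) has_real_derivative 1) (at z)" by (auto intro!: derivative_eq_intros)
  from DERIV_chain2[OF cdf_deriv[of "z - \<theta>"] this] show ?thesis by simp
qed

lemma cdf_isCont: "isCont (cdf g) x"
  using cdf_deriv DERIV_isCont by blast

lemma cdf_comp_isCont: "isCont f x \<Longrightarrow> isCont (\<lambda>x. cdf g (f x)) x"
  by (rule isCont_o2[OF _ cdf_isCont])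

lemma cdf_strict_mono: "x < y \<Longrightarrow> cdf g x < cdf g y"
  by (rule DERIV_pos_imp_increasing) (use cdf_deriv pos in blast)+

lemma cdf_mono: "x \<le> y \<Longrightarrow> cdf g x \<le> cdf g y"
  using cdf_strict_mono[of x y] by (cases "x = y") auto

lemma cdf_less_iff: "cdf g x < cdf g y \<longleftrightarrow> x < y"
  using cdf_strict_mono cdf_mono by (meson not_le)

lemma cdf_le_iff: "cdf g x \<le> cdf g y \<longleftrightarrow> x \<le> y"
  using cdf_strict_mono cdf_mono by (meson not_le)

lemma cdf_at_top: "(cdf g \<longlongrightarrow> 1) at_top"
proof -
  have "((\<lambda>y. \<integral> x. indicator {.. y} x *\<^sub>R g x \<partial>lborel) \<longlongrightarrow> \<integral> x. g x \<partial>lborel) at_top"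
    by (rule tendsto_integral_at_top) (auto simp: integ)
  then show ?thesis
    using total unfolding cdf_def set_lebesgue_integral_def by (simp add: fun_eq_iff)
qed

lemma cdf_symmetric: "cdf g (- x) = 1 - cdf g x"
proof -
  have "cdf g (- x) = (LINT t:{x..}|lborel. g t)"
    unfolding cdf_def by (subst set_integral_reflect) (simp add: symm atLeast_def)
  also have "\<dots> = (LINT t:{x<..}|lborel. g t)"
  proof (rule set_integral_cong_set)
    show "AE t in lborel. (t \<in> {x<..}) = (t \<in> {x..})"
      using AE_lborel_singleton[of x] by eventually_elim auto
  qed (unfold set_borel_measurable_def, measurable)
  finally have upper: "cdf g (- x) = (LINT t:{x<..}|lborel. g t)" .
  have "{..x} \<union> {x<..} = UNIV" "{..x} \<inter> {x<..} = {}" by auto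
  then have "(LINT t:UNIV|lborel. g t) = (LINT t:{..x}|lborel. g t) + (LINT t:{x<..}|lborel. g t)"
    using set_integral_Un[of "{..x}" "{x<..}" lborel g]
      set_integrable_density[of "{..x}"] set_integrable_density[of "{x<..}"] by auto
  moreover have "(LINT t:UNIV|lborel. g t) = 1"
    using total unfolding set_lebesgue_integral_def by simp
  ultimately show ?thesis using upper unfolding cdf_def by linarith
qed

lemma cdf_zero: "cdf g 0 = 1/2"
  using cdf_symmetric[of 0] by simp

lemma cdf_at_bot: "(cdf g \<longlongrightarrow> 0) at_bot"
proof -
  have "((\<lambda>x. 1 - cdf g (- x)) \<longlongrightarrow> 1 - 1) at_bot"
    by (intro tendsto_diff tendsto_const filterlim_compose[OF cdf_at_top] filterlim_uminus_at_top_at_bot)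
  then show ?thesis by (simp add: cdf_symmetric)
qed

lemma cdf_shift_at_bot: "((\<lambda>z. cdf g (z - \<theta>)) \<longlongrightarrow> 0) at_bot"
proof -
  have "filterlim (\<lambda>z::real. - (- z + \<theta>)) at_bot at_bot"
    using filterlim_compose[OF filterlim_uminus_at_bot_at_top
        filterlim_compose[OF filterlim_add_const_at_top filterlim_uminus_at_top_at_bot]] .
  then show ?thesis using filterlim_compose[OF cdf_at_bot] by simp
qed

lemma cdf_shift_at_top: "((\<lambda>z. cdf g (z + \<theta>)) \<longlongrightarrow> 1) at_top"
  by (rule filterlim_compose[OF cdf_at_top filterlim_add_const_at_top])

lemma cdf_pos: "0 < cdf g x"
proof -
  have "0 \<le> cdf g (x - 1)"
    unfolding cdf_def set_lebesgue_integral_def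
    by (rule Bochner_Integration.integral_nonneg) (auto simp: pos less_imp_le split: split_indicator)
  then show ?thesis using cdf_strict_mono[of "x - 1" x] by simp
qed

lemma cdf_less_1: "cdf g x < 1"
  using cdf_pos[of "-x"] cdf_symmetric[of x] by simp

lemma cdf_surj: assumes "0 < t" "t < 1" shows "\<exists>y. cdf g y = t"
proof -
  have "eventually (\<lambda>y. cdf g y < t) at_bot"
    using cdf_at_bot assms(1) by (rule order_tendstoD)
  then obtain a where a: "cdf g a < t" by (auto simp: eventually_at_bot_linorder)
  have "eventually (\<lambda>y. t < cdf g y) at_top"
    using cdf_at_top assms(2) by (rule order_tendstoD)
  then obtain b where b: "t < cdf g b" by (auto simp: eventually_at_top_linorder)
  have "a \<le> b" using a b cdf_le_iff[of b a] by linarith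
  moreover have "continuous_on {a..b} (cdf g)"
    using cdf_isCont continuous_at_imp_continuous_on by blast
  ultimately show ?thesis using IVT'[of "cdf g" a t b] a b by auto
qed

lemma qf_cdf: "qf g (cdf g x) = x"
proof -
  have "{y. cdf g x \<le> cdf g y} = {x..}" by (auto simp: cdf_le_iff)
  then show ?thesis unfolding qf_def by simp
qed

lemma cdf_qf: assumes "0 < t" "t < 1" shows "cdf g (qf g t) = t"
  using cdf_surj[OF assms] qf_cdf by metis

lemma qf_le_iff: assumes "0 < t" "t < 1" shows "qf g t \<le> y \<longleftrightarrow> t \<le> cdf g y"
  using cdf_le_iff[of "qf g t" y] cdf_qf[OF assms] by simp

lemma le_qf_iff: assumes "0 < t" "t < 1" shows "y \<le> qf g t \<longleftrightarrow> cdf g y \<le> t"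
  using cdf_le_iff[of y "qf g t"] cdf_qf[OF assms] by simp

lemma emeasure_shift_atMost:
  "emeasure (density lborel (\<lambda>x. ennreal (g (x - \<theta>)))) {..y} = ennreal (cdf g (y - \<theta>))"
proof -
  have "emeasure (density lborel (\<lambda>x. ennreal (g (x - \<theta>)))) {..y}
      = (\<integral>\<^sup>+x. ennreal (g (x - \<theta>)) * indicator {..y} x \<partial>lborel)"
    by (rule emeasure_density) auto
  also have "\<dots> = (\<integral>\<^sup>+x. ennreal (g (\<theta> + 1 * x - \<theta>)) * indicator {..y} (\<theta> + 1 * x) \<partial>lborel)"
    using nn_integral_real_affine[of "\<lambda>x. ennreal (g (x - \<theta>)) * indicator {..y} x" 1 \<theta>] by simp
  also have "\<dots> = (\<integral>\<^sup>+x. ennreal (indicator {..y - \<theta>} x * g x) \<partial>lborel)"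
    by (intro nn_integral_cong) (auto split: split_indicator)
  also have "\<dots> = ennreal (\<integral>x. indicator {..y - \<theta>} x * g x \<partial>lborel)"
    using integrable_mult_indicator[of "{..y-\<theta>}" lborel g] integ
    by (intro nn_integral_eq_integral) (auto simp: pos less_imp_le)
  also have "\<dots> = ennreal (cdf g (y - \<theta>))" by (simp add: cdf_def set_lebesgue_integral_def)
  finally show ?thesis .
qed

lemma emeasure_shift_lessThan:
  "emeasure (density lborel (\<lambda>x. ennreal (g (x - \<theta>)))) {..<y} = ennreal (cdf g (y - \<theta>))"
proof -
  have "emeasure (density lborel (\<lambda>x. ennreal (g (x - \<theta>)))) {..<y}
      = (\<integral>\<^sup>+x. ennreal (g (x - \<theta>)) * indicator {..<y} x \<partial>lborel)"
    by (rule emeasure_density) auto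
  also have "\<dots> = (\<integral>\<^sup>+x. ennreal (g (x - \<theta>)) * indicator {..y} x \<partial>lborel)"
    by (intro nn_integral_cong_AE eventually_mono[OF AE_lborel_singleton[of y]])
      (auto split: split_indicator)
  also have "\<dots> = emeasure (density lborel (\<lambda>x. ennreal (g (x - \<theta>)))) {..y}"
    by (rule emeasure_density[symmetric]) auto
  finally show ?thesis using emeasure_shift_atMost by simp
qed

lemma measure_shift_atMost:
  "measure (density lborel (\<lambda>x. ennreal (g (x - \<theta>)))) {..y} = cdf g (y - \<theta>)"
  using emeasure_shift_atMost cdf_pos less_imp_le by (simp add: measure_def)

lemma measure_shift_lessThan:
  "measure (density lborel (\<lambda>x. ennreal (g (x - \<theta>)))) {..<y} = cdf g (y - \<theta>)"
  using emeasure_shift_lessThan cdf_pos less_imp_le by (simp add: measure_def)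

end

section \<open>Consequences of log-concavity\<close>

locale logconcave_density =
  fixes g :: "real \<Rightarrow> real"
  assumes meas: "g \<in> borel_measurable borel"
    and integ: "integrable lborel g"
    and total: "(LINT x|lborel. g x) = 1"
    and symm: "\<And>z. g (- z) = g z"
    and pos: "\<And>x. 0 < g x"
    and unimodal: "\<And>x y. 0 \<le> x \<Longrightarrow> x \<le> y \<Longrightarrow> g y \<le> g x"
    and logconc: "\<And>x y t. 0 < g x \<Longrightarrow> 0 < g y \<Longrightarrow> 0 \<le> t \<Longrightarrow> t \<le> 1 \<Longrightarrow>
                    t * ln (g x) + (1 - t) * ln (g y) \<le> ln (g (t * x + (1 - t) * y))"

sublocale logconcave_density \<subseteq> symmetric_density
  using meas integ total symm pos logconcave_continuous[OF pos logconc] by unfold_locales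

context logconcave_density
begin

lemma logconcave_inner_product:
  assumes "p \<le> q" "q \<le> w" "p \<le> q'" "q' \<le> w" "q + q' = p + w"
  shows "g p * g w \<le> g q * g q'"
proof (cases "p = w")
  case True
  then show ?thesis using assms by simp
next
  case False
  then have pw: "p < w" using assms by simp
  define l where "l = (w - q) / (w - p)"
  have l: "0 \<le> l" "l \<le> 1" using assms pw by (auto simp: l_def field_simps)
  have lw: "l * (w - p) = w - q" using pw by (simp add: l_def)
  have q: "q = l * p + (1 - l) * w" using lw by (simp add: algebra_simps)
  have q': "q' = (1 - l) * p + (1 - (1 - l)) * w" using lw assms(5) by (simp add: algebra_simps)
  have "l * ln (g p) + (1 - l) * ln (g w) \<le> ln (g q)"
    using logconc[OF pos pos l] q by simp
  moreover have "(1 - l) * ln (g p) + (1 - (1 - l)) * ln (g w) \<le> ln (g q')"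
    using logconc[OF pos pos, of "1 - l"] l q' by simp
  ultimately have "ln (g p * g w) \<le> ln (g q * g q')"
    using ln_mult_pos[OF pos[of p] pos[of w]] ln_mult_pos[OF pos[of q] pos[of q']]
    by (simp add: algebra_simps)
  then show ?thesis using pos by (simp add: mult_pos_pos)
qed

lemma likelihood_ratio_mono:
  assumes "0 \<le> \<theta>" "s \<le> t" shows "g (s - \<theta>) * g t \<le> g (t - \<theta>) * g s"
  using logconcave_inner_product[of "s - \<theta>" s t "t - \<theta>"] assms by (simp add: mult.commute)

text \<open>Integrating the likelihood ratio inequality from \<open>-\<infinity>\<close>: \<open>g(y)/G(y)\<close>, the
  reversed hazard rate, dominates its shift.\<close>

lemma reversed_hazard_shift:
  assumes "0 \<le> \<theta>" shows "g y * cdf g (y - \<theta>) \<le> g (y - \<theta>) * cdf g y"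
proof -
  define K where "K z = g y * cdf g (z - \<theta>) - g (y - \<theta>) * cdf g z" for z
  have dK: "(K has_real_derivative (g y * g (z - \<theta>) - g (y - \<theta>) * g z)) (at z)" for z
    unfolding K_def by (intro DERIV_diff DERIV_cmult cdf_shift_deriv cdf_deriv)
  have "K y \<le> K z" if "z \<le> y" for z
  proof (rule DERIV_nonpos_imp_nonincreasing[OF that])
    fix x assume "z \<le> x" "x \<le> y"
    then show "\<exists>d. (K has_real_derivative d) (at x) \<and> d \<le> 0"
      using dK likelihood_ratio_mono[OF assms \<open>x \<le> y\<close>]
      by (intro exI[of _ "g y * g (x - \<theta>) - g (y - \<theta>) * g x"]) (auto simp: mult.commute)
  qed
  moreover have "(K \<longlongrightarrow> g y * 0 - g (y - \<theta>) * 0) at_bot"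
    unfolding K_def by (intro tendsto_intros cdf_shift_at_bot cdf_at_bot)
  ultimately have "K y \<le> 0"
    using tendsto_lowerbound[of K 0 at_bot "K y"] by (auto simp: eventually_at_bot_linorder)
  then show ?thesis by (simp add: K_def)
qed

lemma cdf_shift_ratio_mono:
  assumes "0 \<le> \<theta>" "x \<le> y" shows "cdf g (x - \<theta>) * cdf g y \<le> cdf g (y - \<theta>) * cdf g x"
proof -
  define R where "R z = cdf g (z - \<theta>) / cdf g z" for z
  have dR: "(R has_real_derivative
      ((g (z - \<theta>) * cdf g z - cdf g (z - \<theta>) * g z) / (cdf g z * cdf g z))) (at z)" for z
    unfolding R_def using cdf_pos[of z] by (intro DERIV_divide cdf_shift_deriv cdf_deriv) auto
  have "R x \<le> R y"
  proof (rule DERIV_nonneg_imp_nondecreasing[OF assms(2)])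
    fix z
    have "0 \<le> (g (z - \<theta>) * cdf g z - cdf g (z - \<theta>) * g z) / (cdf g z * cdf g z)"
      using reversed_hazard_shift[OF assms(1), of z] by (auto simp: mult.commute)
    then show "\<exists>d. (R has_real_derivative d) (at z) \<and> 0 \<le> d" using dR by blast
  qed
  then show ?thesis using cdf_pos[of x] cdf_pos[of y] by (simp add: R_def field_simps)
qed

text \<open>Unimodality: a shift by \<open>\<theta> \<in> [0, 2z]\<close> moves \<open>z\<close> closer to the mode \<open>0\<close>.\<close>

lemma density_shift_ge: assumes "0 \<le> \<theta>" "\<theta> \<le> 2 * z" shows "g z \<le> g (z - \<theta>)"
proof (cases "0 \<le> z - \<theta>")
  case True then show ?thesis using unimodal[of "z - \<theta>" z] assms by simp
next
  case False
  then have "g z \<le> g (\<theta> - z)" using unimodal[of "\<theta> - z" z] assms by simp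
  also have "g (\<theta> - z) = g (z - \<theta>)" using symm[of "z - \<theta>"] by simp
  finally show ?thesis .
qed

end

section \<open>The HPD interval and its lower endpoint\<close>

locale hpd_interval = logconcave_density +
  fixes \<alpha> :: real
  assumes alpha: "0 < \<alpha>" "\<alpha> < 1"
begin

abbreviation "D0 \<equiv> d0 g \<alpha>"
abbreviation "D1 \<equiv> d1 g \<alpha>"

lemma cdf_d0: "cdf g D0 = 1 / (1 + \<alpha>)"
  unfolding d0_def using alpha by (intro cdf_qf) (auto simp: field_simps)

lemma cdf_d1: "cdf g D1 = 1 - \<alpha> / 2"
  unfolding d1_def using alpha by (intro cdf_qf) auto

lemma cdf_neg_d0: "cdf g (- D0) = \<alpha> / (1 + \<alpha>)"
proof -
  have "1 - 1 / (1 + \<alpha>) = \<alpha> / (1 + \<alpha>)" using alpha by (simp add: field_simps)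
  then show ?thesis using cdf_d0 cdf_symmetric[of D0] by simp
qed

lemma cdf_neg_d1: "cdf g (- D1) = \<alpha> / 2"
  using cdf_d1 cdf_symmetric[of D1] by simp

lemma d0_pos: "0 < D0"
proof -
  have "1/2 < 1 / (1 + \<alpha>)" using alpha by (simp add: field_simps)
  then show ?thesis using cdf_d0 cdf_zero cdf_less_iff[of 0 D0] by simp
qed

lemma d1_pos: "0 < D1"
  using cdf_d1 cdf_zero cdf_less_iff[of 0 D1] alpha by simp

text \<open>For \<open>x > d\<^sub>0\<close> the interval is \<open>x \<plusminus> qf(two_sided_level x)\<close>; the level lies
  strictly between \<open>1/2\<close> and \<open>1 - \<alpha>/2\<close>.\<close>

abbreviation two_sided_level :: "real \<Rightarrow> real" where
  "two_sided_level x \<equiv> 1/2 + (1 - \<alpha>) / 2 * cdf g x"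

lemma two_sided_level_gt: "1/2 < two_sided_level x"
  using cdf_pos[of x] alpha by simp

lemma two_sided_level_less: "two_sided_level x < 1 - \<alpha>/2"
proof -
  have "(1 - \<alpha>) / 2 * cdf g x < (1 - \<alpha>) / 2 * 1"
    using cdf_less_1[of x] alpha by (intro mult_strict_left_mono) auto
  then show ?thesis by simp
qed

lemma two_sided_level_less_1: "two_sided_level x < 1"
  using two_sided_level_less[of x] alpha by simp

lemma two_sided_level_mono: "x \<le> y \<Longrightarrow> two_sided_level x \<le> two_sided_level y"
  using cdf_mono[of x y] alpha by (simp add: mult_left_mono)

lemma two_sided_level_d0: "two_sided_level D0 = cdf g D0"
  using alpha by (simp add: cdf_d0 field_simps)

text \<open>For \<open>x \<le> d\<^sub>0\<close> the interval is \<open>[0, x - qf(\<alpha> G(x))]\<close>, with level in \<open>(0,1)\<close>.\<close>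

lemma one_sided_level_bounds: "0 < \<alpha> * cdf g x" "\<alpha> * cdf g x < 1"
proof -
  show "0 < \<alpha> * cdf g x" using alpha cdf_pos by simp
  have "\<alpha> * cdf g x < 1 * 1"
    using alpha cdf_less_1[of x] cdf_pos[of x] by (intro mult_strict_mono) auto
  then show "\<alpha> * cdf g x < 1" by simp
qed

lemma up_ge_iff_left:
  "x \<le> D0 \<Longrightarrow> \<theta> \<le> up g \<alpha> x \<longleftrightarrow> \<alpha> * cdf g x \<le> cdf g (x - \<theta>)"
  using qf_le_iff[OF one_sided_level_bounds, of x "x - \<theta>"] by (auto simp: up_def)

lemma up_d0: "up g \<alpha> D0 = 2 * D0"
proof -
  have "\<alpha> * cdf g D0 = cdf g (- D0)" using cdf_d0 cdf_neg_d0 by simp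
  then show ?thesis using qf_cdf by (simp add: up_def)
qed

lemma up_ge_iff_right:
  assumes "D0 \<le> x" shows "\<theta> \<le> up g \<alpha> x \<longleftrightarrow> cdf g (\<theta> - x) \<le> two_sided_level x"
proof (cases "x = D0")
  case True
  then show ?thesis using up_d0 two_sided_level_d0 cdf_le_iff[of "\<theta> - D0" D0] by auto
next
  case False
  then show ?thesis
    using assms le_qf_iff[OF _ two_sided_level_less_1, of x "\<theta> - x"] two_sided_level_gt[of x]
    by (auto simp: up_def)
qed

lemma lo_le_iff_right:
  "D0 < x \<Longrightarrow> lo g \<alpha> x \<le> \<theta> \<longleftrightarrow> cdf g (x - \<theta>) \<le> two_sided_level x"
  using le_qf_iff[OF _ two_sided_level_less_1, of x "x - \<theta>"] two_sided_level_gt[of x]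
  by (auto simp: lo_def)

lemma qf_two_sided_level_nonneg: "0 \<le> qf g (two_sided_level x)"
  using le_qf_iff[OF _ two_sided_level_less_1, of x 0] two_sided_level_gt[of x] cdf_zero by auto

lemma up_pos: "0 < up g \<alpha> x"
proof (cases "x \<le> D0")
  case True
  have "\<not> x \<le> qf g (\<alpha> * cdf g x)"
    using le_qf_iff[OF one_sided_level_bounds, of x x] cdf_pos[of x] alpha by auto
  then show ?thesis using True by (simp add: up_def)
next
  case False
  then show ?thesis using qf_two_sided_level_nonneg[of x] d0_pos by (simp add: up_def)
qed

lemma up_ge_self: "D0 < x \<Longrightarrow> x \<le> up g \<alpha> x"
  using qf_two_sided_level_nonneg by (simp add: up_def)

text \<open>On \<open>x \<le> d\<^sub>0\<close> this is the monotonicity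
  of \<open>G(x - \<theta>)/G(x)\<close>; on \<open>x \<ge> d\<^sub>0\<close> it is immediate; and the two pieces meet
  at \<open>up d\<^sub>0 = 2 d\<^sub>0\<close>.\<close>

lemma up_mono_left: assumes "x \<le> y" "y \<le> D0" shows "up g \<alpha> x \<le> up g \<alpha> y"
proof -
  define t where "t = up g \<alpha> x"
  have t0: "0 \<le> t" using up_pos[of x] by (simp add: t_def)
  have "\<alpha> * cdf g x \<le> cdf g (x - t)" using up_ge_iff_left[of x t] assms by (simp add: t_def)
  then have "\<alpha> * cdf g x * cdf g y \<le> cdf g (x - t) * cdf g y"
    using cdf_pos[of y] by (simp add: mult_right_mono)
  also have "\<dots> \<le> cdf g (y - t) * cdf g x" by (rule cdf_shift_ratio_mono[OF t0 assms(1)])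
  finally have "\<alpha> * cdf g y \<le> cdf g (y - t)"
    using cdf_pos[of x] by (simp add: mult.commute mult.left_commute)
  then show ?thesis using up_ge_iff_left[of y t] assms by (simp add: t_def)
qed

lemma up_ge_2d0: assumes "D0 \<le> x" shows "2 * D0 \<le> up g \<alpha> x"
proof -
  have "cdf g (2 * D0 - x) \<le> cdf g D0" using assms by (simp add: cdf_le_iff)
  also have "\<dots> \<le> two_sided_level x" using two_sided_level_mono[OF assms] two_sided_level_d0 by simp
  finally show ?thesis using up_ge_iff_right[OF assms] by simp
qed

lemma up_mono: assumes "x \<le> y" shows "up g \<alpha> x \<le> up g \<alpha> y"
proof (cases "y \<le> D0")
  case True then show ?thesis using up_mono_left assms by simp
next
  case y: False
  show ?thesis
  proof (cases "x \<le> D0")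
    case True
    then have "up g \<alpha> x \<le> 2 * D0" using up_mono_left[OF True order_refl] up_d0 by simp
    also have "\<dots> \<le> up g \<alpha> y" using y up_ge_2d0 by simp
    finally show ?thesis .
  next
    case False
    define t where "t = up g \<alpha> x"
    have "cdf g (t - x) \<le> two_sided_level x" using up_ge_iff_right[of x t] False by (simp add: t_def)
    moreover have "cdf g (t - y) \<le> cdf g (t - x)" using assms by (simp add: cdf_le_iff)
    moreover have "two_sided_level x \<le> two_sided_level y" using two_sided_level_mono assms by simp
    ultimately have "cdf g (t - y) \<le> two_sided_level y" by linarith
    then show ?thesis using up_ge_iff_right[of y t] y by (simp add: t_def)
  qed
qed

text \<open>For \<open>x > d\<^sub>0\<close>, \<open>lo x \<le> \<theta>\<close> iff \<open>lower_excess \<theta> x \<le> 0\<close>.  For \<open>\<theta> \<ge> 0\<close>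
  the excess is negative up to \<open>\<theta>\<close> and strictly increasing after it (unimodality),
  so the acceptance region \<open>{x. lo x \<le> \<theta>}\<close> is a half-line.\<close>

definition lower_excess :: "real \<Rightarrow> real \<Rightarrow> real" where
  "lower_excess \<theta> x = cdf g (x - \<theta>) - two_sided_level x"

lemma lower_excess_isCont: "isCont (lower_excess \<theta>) x"
  unfolding lower_excess_def by (intro continuous_intros cdf_comp_isCont cdf_isCont)

lemma lower_excess_neg: "0 \<le> \<theta> \<Longrightarrow> x \<le> \<theta> \<Longrightarrow> lower_excess \<theta> x < 0"
  using cdf_mono[of "x - \<theta>" 0] cdf_zero two_sided_level_gt[of x] unfolding lower_excess_def by simp

lemma lower_excess_strict_mono:
  assumes "0 \<le> \<theta>" "\<theta> \<le> x" "x < y" shows "lower_excess \<theta> x < lower_excess \<theta> y"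
proof (rule DERIV_pos_imp_increasing[OF assms(3)])
  fix z assume z: "x \<le> z" "z \<le> y"
  have d: "(lower_excess \<theta> has_real_derivative (g (z - \<theta>) - (1 - \<alpha>) / 2 * g z)) (at z)"
    unfolding lower_excess_def[abs_def]
    by (auto intro!: derivative_eq_intros cdf_shift_deriv cdf_deriv)
  have "(1 - \<alpha>) / 2 * g z < 1 * g z" using pos[of z] alpha by (intro mult_strict_right_mono) auto
  also have "\<dots> \<le> g (z - \<theta>)" using density_shift_ge[of \<theta> z] assms z by simp
  finally show "\<exists>d. (lower_excess \<theta> has_real_derivative d) (at z) \<and> 0 < d"
    using d by auto
qed

lemma lo_le_iff_excess:
  "0 \<le> \<theta> \<Longrightarrow> lo g \<alpha> x \<le> \<theta> \<longleftrightarrow> x \<le> D0 \<or> lower_excess \<theta> x \<le> 0"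
  using lo_le_iff_right[of x \<theta>] unfolding lower_excess_def by (cases "x \<le> D0") (auto simp: lo_def)

lemma lower_excess_d0: "0 \<le> \<theta> \<Longrightarrow> lower_excess \<theta> D0 \<le> 0"
  using cdf_mono[of "D0 - \<theta>" D0] two_sided_level_d0 unfolding lower_excess_def by simp

lemma lower_excess_at_top: "(lower_excess \<theta> \<longlongrightarrow> \<alpha> / 2) at_top"
proof -
  have "((\<lambda>x. cdf g (x - \<theta>) - two_sided_level x) \<longlongrightarrow> 1 - (1/2 + (1 - \<alpha>) / 2 * 1)) at_top"
    using cdf_shift_at_top[of "-\<theta>"] by (intro tendsto_intros cdf_at_top) simp_all
  then show ?thesis unfolding lower_excess_def[abs_def] by (simp add: field_simps)
qed

lemma lo_le_downward:
  assumes "0 \<le> \<theta>" "lo g \<alpha> x \<le> \<theta>" "y \<le> x" shows "lo g \<alpha> y \<le> \<theta>"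
proof (cases "y \<le> D0")
  case False
  then have "lower_excess \<theta> x \<le> 0" using assms lo_le_iff_excess by auto
  moreover have "lower_excess \<theta> y \<le> lower_excess \<theta> x \<or> lower_excess \<theta> y < 0"
    using lower_excess_strict_mono[OF assms(1), of y x] lower_excess_neg[OF assms(1), of y] assms(3)
    by (cases "\<theta> \<le> y"; cases "y = x") auto
  ultimately show ?thesis using assms(1) lo_le_iff_excess by auto
qed (use assms lo_le_iff_excess in auto)

text \<open>Since the excess tends to \<open>\<alpha>/2 > 0\<close>, the acceptance region is bounded above.\<close>

lemma lo_region_bdd_above: assumes "0 \<le> \<theta>" shows "bdd_above {x. lo g \<alpha> x \<le> \<theta>}"
proof -
  have "eventually (\<lambda>x. 0 < lower_excess \<theta> x) at_top"
    using lower_excess_at_top[of \<theta>] by (rule order_tendstoD(1)) (use alpha in simp)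
  then obtain b where b: "\<And>x. b \<le> x \<Longrightarrow> 0 < lower_excess \<theta> x"
    by (auto simp: eventually_at_top_linorder)
  have "x \<le> max b D0" if "lo g \<alpha> x \<le> \<theta>" for x
  proof (rule ccontr)
    assume "\<not> x \<le> max b D0"
    then have "b \<le> x" "\<not> x \<le> D0" by auto
    then show False using that b[of x] lo_le_iff_excess[OF assms, of x] by simp
  qed
  then show ?thesis by (intro bdd_aboveI) auto
qed

lemma lo_region: assumes "0 \<le> \<theta>" shows "{x. lo g \<alpha> x \<le> \<theta>} = {..lo_inv g \<alpha> \<theta>}"
proof -
  have "{x. lo g \<alpha> x \<le> \<theta>} = {..D0} \<union> {x. lower_excess \<theta> x \<le> 0}"
    using lo_le_iff_excess[OF assms] by auto
  moreover have "closed {x. lower_excess \<theta> x \<le> 0}"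
    using lower_excess_isCont by (intro closed_Collect_le continuous_at_imp_continuous_on) auto
  ultimately have "closed {x. lo g \<alpha> x \<le> \<theta>}" by auto
  moreover have "D0 \<in> {x. lo g \<alpha> x \<le> \<theta>}" using assms by (simp add: lo_def)
  ultimately show ?thesis
    using closed_downset_eq_atMost[of "{x. lo g \<alpha> x \<le> \<theta>}" D0] lo_region_bdd_above[OF assms]
      lo_le_downward[OF assms] by (simp add: lo_inv_def)
qed

lemma lo_le_iff_le_lo_inv: "0 \<le> \<theta> \<Longrightarrow> lo g \<alpha> x \<le> \<theta> \<longleftrightarrow> x \<le> lo_inv g \<alpha> \<theta>"
  using lo_region by (metis atMost_iff mem_Collect_eq)

lemma lower_excess_lo_inv: assumes "0 \<le> \<theta>" shows "lower_excess \<theta> (lo_inv g \<alpha> \<theta>) = 0"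
proof -
  let ?r = "lo_inv g \<alpha> \<theta>"
  note region = lo_le_iff_le_lo_inv[OF assms]
  have "D0 \<le> ?r" using region[of D0] assms by (simp add: lo_def)
  then have "lower_excess \<theta> ?r \<le> 0"
    using region[of ?r] lower_excess_d0[OF assms] lo_le_iff_excess[OF assms, of ?r]
    by (cases "?r = D0") auto
  moreover have "\<not> lower_excess \<theta> ?r < 0"
  proof
    assume "lower_excess \<theta> ?r < 0"
    then obtain y where "y > ?r" "lower_excess \<theta> y < 0"
      using isCont_less_right[OF lower_excess_isCont] by blast
    then show False using region[of y] lo_le_iff_excess[OF assms, of y] by simp
  qed
  ultimately show ?thesis by simp
qed

end

context hpd_interval
begin

lemma le_xx1_iff:
  assumes "0 \<le> \<theta>"
  shows "z \<le> xx1 g \<alpha> \<theta> \<longleftrightarrow> z + \<theta> \<le> D0 \<or> cdf g z \<le> two_sided_level (z + \<theta>)"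
proof -
  have "z \<le> xx1 g \<alpha> \<theta> \<longleftrightarrow> lo g \<alpha> (z + \<theta>) \<le> \<theta>"
    using lo_le_iff_le_lo_inv[OF assms] by (simp add: xx1_def algebra_simps)
  then show ?thesis using lo_le_iff_excess[OF assms] by (simp add: lower_excess_def)
qed

lemma cdf_xx1: "0 \<le> \<theta> \<Longrightarrow> cdf g (xx1 g \<alpha> \<theta>) = two_sided_level (xx1 g \<alpha> \<theta> + \<theta>)"
  using lower_excess_lo_inv[of \<theta>] unfolding xx1_def lower_excess_def by simp

lemma xx1_equation:
  "0 \<le> \<theta> \<Longrightarrow> 2 * cdf g (xx1 g \<alpha> \<theta>) - 1 = (1 - \<alpha>) * cdf g (xx1 g \<alpha> \<theta> + \<theta>)"
  using cdf_xx1[of \<theta>] by (simp add: field_simps)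

text \<open>\<open>x\<^sub>1 \<ge> d\<^sub>0\<close>, and \<open>x\<^sub>1\<close> is nondecreasing because the level increases with \<open>\<theta>\<close>.\<close>

lemma xx1_ge_d0: "0 \<le> \<theta> \<Longrightarrow> D0 \<le> xx1 g \<alpha> \<theta>"
  using le_xx1_iff[of \<theta> D0] two_sided_level_d0 two_sided_level_mono[of D0 "D0 + \<theta>"] by simp

lemma xx1_mono: assumes "0 \<le> s" "s \<le> t" shows "xx1 g \<alpha> s \<le> xx1 g \<alpha> t"
proof -
  have "cdf g (xx1 g \<alpha> s) \<le> two_sided_level (xx1 g \<alpha> s + t)"
    using cdf_xx1[OF assms(1)] two_sided_level_mono[of "xx1 g \<alpha> s + s" "xx1 g \<alpha> s + t"] assms
    by simp
  then show ?thesis using le_xx1_iff[of t "xx1 g \<alpha> s"] assms by simp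
qed

text \<open>As \<open>\<theta> \<rightarrow> \<infinity>\<close> the level tends to \<open>1 - \<alpha>/2 = G(d\<^sub>1)\<close>; as \<open>\<theta> \<rightarrow> 0\<^sup>+\<close>
  the only solution left is \<open>d\<^sub>0\<close>, the fixed point of \<open>G = two_sided_level\<close>.\<close>

lemma xx1_at_top: "(xx1 g \<alpha> \<longlongrightarrow> D1) at_top"
proof (rule order_tendstoI)
  fix lower assume lower: "lower < D1"
  define z where "z = (lower + D1) / 2"
  have z: "lower < z" "z < D1" using lower by (auto simp: z_def)
  have "((\<lambda>\<theta>. two_sided_level (z + \<theta>)) \<longlongrightarrow> 1/2 + (1 - \<alpha>) / 2 * 1) at_top"
    using cdf_shift_at_top[of z] by (intro tendsto_intros) (simp add: add.commute)
  moreover have "cdf g z < 1/2 + (1 - \<alpha>) / 2 * 1"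
    using cdf_d1 cdf_strict_mono[OF z(2)] by (simp add: field_simps)
  ultimately have "eventually (\<lambda>\<theta>. cdf g z < two_sided_level (z + \<theta>)) at_top"
    by (rule order_tendstoD(1))
  with eventually_ge_at_top[of 0]
  show "eventually (\<lambda>\<theta>. lower < xx1 g \<alpha> \<theta>) at_top"
  proof eventually_elim
    case (elim \<theta>)
    then show ?case using le_xx1_iff[of \<theta> z] z by simp
  qed
next
  fix upper assume upper: "D1 < upper"
  show "eventually (\<lambda>\<theta>. xx1 g \<alpha> \<theta> < upper) at_top"
    using eventually_ge_at_top[of 0]
  proof eventually_elim
    case (elim \<theta>)
    have "cdf g (xx1 g \<alpha> \<theta>) < cdf g D1"
      using cdf_xx1[OF elim] two_sided_level_less[of "xx1 g \<alpha> \<theta> + \<theta>"] cdf_d1 by simp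
    then show ?case using upper cdf_less_iff[of "xx1 g \<alpha> \<theta>" D1] by simp
  qed
qed

lemma xx1_at_right_0: "(xx1 g \<alpha> \<longlongrightarrow> D0) (at_right 0)"
proof (rule order_tendstoI)
  fix lower assume lower: "lower < D0"
  have "eventually (\<lambda>\<theta>::real. 0 < \<theta>) (at_right 0)"
    by (simp add: eventually_at_right_less)
  then show "eventually (\<lambda>\<theta>. lower < xx1 g \<alpha> \<theta>) (at_right 0)"
    by eventually_elim (use xx1_ge_d0 lower in \<open>fastforce intro: order.strict_trans2\<close>)
next
  fix upper assume upper: "D0 < upper"
  define z where "z = (D0 + upper) / 2"
  have z: "D0 < z" "z < upper" using upper by (auto simp: z_def)
  have "isCont (\<lambda>\<theta>. two_sided_level (z + \<theta>)) 0"
    by (intro continuous_intros cdf_comp_isCont)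
  then have "((\<lambda>\<theta>. two_sided_level (z + \<theta>)) \<longlongrightarrow> two_sided_level z) (at 0)"
    unfolding isCont_def by simp
  then have "((\<lambda>\<theta>. two_sided_level (z + \<theta>)) \<longlongrightarrow> two_sided_level z) (at_right 0)"
    by (rule tendsto_within_subset) simp
  moreover have "two_sided_level z < cdf g z"
  proof -
    have "1 / (1 + \<alpha>) < cdf g z" using cdf_d0 cdf_strict_mono[OF z(1)] by simp
    then have "1 < (1 + \<alpha>) * cdf g z" using alpha by (simp add: field_simps)
    then show ?thesis by (simp add: field_simps)
  qed
  ultimately have "eventually (\<lambda>\<theta>. two_sided_level (z + \<theta>) < cdf g z) (at_right 0)"
    by (rule order_tendstoD(2))
  moreover have "eventually (\<lambda>\<theta>::real. 0 < \<theta>) (at_right 0)"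
    by (simp add: eventually_at_right_less)
  ultimately show "eventually (\<lambda>\<theta>. xx1 g \<alpha> \<theta> < upper) (at_right 0)"
  proof eventually_elim
    case (elim \<theta>)
    then show ?case using le_xx1_iff[of \<theta> z] z by simp
  qed
qed

text \<open>The right end of the acceptance region of \<open>lo\<close> is covered by the upper
  endpoint, since \<open>lo x \<le> up x\<close>; this makes the coverage region an interval.\<close>

lemma lo_inv_below_up: assumes "0 \<le> \<theta>" shows "\<theta> \<le> up g \<alpha> (lo_inv g \<alpha> \<theta>)"
proof -
  let ?r = "lo_inv g \<alpha> \<theta>"
  have "D0 \<le> ?r" using xx1_ge_d0[OF assms] assms by (simp add: xx1_def)
  moreover have "cdf g (\<theta> - ?r) = 1 - two_sided_level ?r"
    using cdf_xx1[OF assms] cdf_symmetric[of "?r - \<theta>"] by (simp add: xx1_def)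
  moreover have "1 - two_sided_level ?r \<le> two_sided_level ?r"
    using two_sided_level_gt[of ?r] by simp
  ultimately show ?thesis using up_ge_iff_right by simp
qed

end

section \<open>The upper endpoint: \<open>x\<^sub>0\<close> and \<open>x\<^sub>2\<close>\<close>

context hpd_interval
begin

text \<open>For \<open>x \<le> d\<^sub>0\<close>, \<open>\<theta> \<le> up x\<close> iff \<open>one_sided_gap \<theta> x \<le> 0\<close>.\<close>

definition one_sided_gap :: "real \<Rightarrow> real \<Rightarrow> real" where
  "one_sided_gap \<theta> x = \<alpha> * cdf g x - cdf g (x - \<theta>)"

lemma one_sided_gap_deriv:
  "(one_sided_gap \<theta> has_real_derivative (\<alpha> * g x - g (x - \<theta>))) (at x)"
  unfolding one_sided_gap_def[abs_def]
  by (intro DERIV_diff DERIV_cmult cdf_deriv cdf_shift_deriv)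

lemma one_sided_gap_isCont: "isCont (one_sided_gap \<theta>) x"
  using one_sided_gap_deriv DERIV_isCont by blast

lemma up_ge_iff_gap: "x \<le> D0 \<Longrightarrow> \<theta> \<le> up g \<alpha> x \<longleftrightarrow> one_sided_gap \<theta> x \<le> 0"
  using up_ge_iff_left by (simp add: one_sided_gap_def)

lemma upper_region_closed: "closed {x. \<theta> \<le> up g \<alpha> x}"
proof -
  have "\<theta> \<le> up g \<alpha> x \<longleftrightarrow> (x \<le> D0 \<and> one_sided_gap \<theta> x \<le> 0) \<or>
      (D0 \<le> x \<and> cdf g (\<theta> - x) - two_sided_level x \<le> 0)" for x
    using up_ge_iff_gap[of x \<theta>] up_ge_iff_right[of x \<theta>] by (cases "x \<le> D0") auto
  then have "{x. \<theta> \<le> up g \<alpha> x} =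
      ({..D0} \<inter> {x. one_sided_gap \<theta> x \<le> 0}) \<union>
      ({D0..} \<inter> {x. cdf g (\<theta> - x) - two_sided_level x \<le> 0})"
    by auto
  moreover have "closed {x. one_sided_gap \<theta> x \<le> 0}"
    using one_sided_gap_isCont by (intro closed_Collect_le continuous_at_imp_continuous_on) auto
  moreover have "closed {x. cdf g (\<theta> - x) - two_sided_level x \<le> 0}"
    by (intro closed_Collect_le continuous_at_imp_continuous_on ballI continuous_intros
        cdf_comp_isCont cdf_isCont)
  ultimately show ?thesis by (auto intro!: closed_Un closed_Int)
qed

text \<open>The gap is strictly decreasing through its zero at \<open>d\<^sub>0\<close> for \<open>\<theta> = 2 d\<^sub>0\<close>, because
  \<open>\<alpha> g(d\<^sub>0) < g(-d\<^sub>0)\<close>; hence \<open>up x < 2 d\<^sub>0\<close> just left of \<open>d\<^sub>0\<close>.\<close>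

lemma up_less_2d0_left: "\<exists>d>0. \<forall>h. 0 < h \<and> h < d \<longrightarrow> up g \<alpha> (D0 - h) < 2 * D0"
proof -
  have "\<alpha> * g D0 - g (D0 - 2 * D0) < 0"
    using symm[of D0] pos[of D0] alpha by simp
  then obtain d where d: "d > 0"
      "\<And>h. h > 0 \<Longrightarrow> h < d \<Longrightarrow> one_sided_gap (2 * D0) D0 < one_sided_gap (2 * D0) (D0 - h)"
    using DERIV_neg_dec_left[OF one_sided_gap_deriv] by blast
  moreover have "one_sided_gap (2 * D0) D0 = 0"
    using cdf_d0 cdf_neg_d0 by (simp add: one_sided_gap_def)
  moreover have "up g \<alpha> (D0 - h) < 2 * D0 \<longleftrightarrow> 0 < one_sided_gap (2 * D0) (D0 - h)" if "0 < h" for h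
    using up_ge_iff_gap[of "D0 - h" "2 * D0"] that by auto
  ultimately show ?thesis by auto
qed

lemma up_0: "up g \<alpha> 0 = D1"
proof -
  have "\<alpha> * cdf g 0 = cdf g (- D1)" by (simp only: cdf_zero cdf_neg_d1)
  then show ?thesis using d0_pos qf_cdf by (simp add: up_def)
qed

text \<open>Left of \<open>0\<close> the gap for \<open>d\<^sub>1\<close> is nonnegative, \<open>G(x - d\<^sub>1) \<le> \<alpha> G(x)\<close>: the ratio
  \<open>G(x - d\<^sub>1)/G(x)\<close> is nondecreasing and equals \<open>\<alpha>\<close> at \<open>x = 0\<close>.\<close>

lemma one_sided_gap_d1_nonneg: "x \<le> 0 \<Longrightarrow> 0 \<le> one_sided_gap D1 x"
  using cdf_shift_ratio_mono[of D1 x 0] d1_pos cdf_zero cdf_neg_d1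
  by (simp add: one_sided_gap_def)

text \<open>A critical point of the gap is a global maximum to its left: by the monotone
  likelihood ratio the derivative \<open>\<alpha> g(x) - g(x - \<theta>)\<close> keeps its sign.\<close>

lemma one_sided_gap_le_critical:
  assumes "0 \<le> \<theta>" "g (y - \<theta>) = \<alpha> * g y" "z \<le> y"
  shows "one_sided_gap \<theta> z \<le> one_sided_gap \<theta> y"
proof (rule DERIV_nonneg_imp_nondecreasing[OF assms(3)])
  fix x assume x: "z \<le> x" "x \<le> y"
  have "g (x - \<theta>) * g y \<le> (\<alpha> * g x) * g y"
    using likelihood_ratio_mono[OF assms(1) x(2)] assms(2) by (simp add: mult_ac)
  then have "g (x - \<theta>) \<le> \<alpha> * g x" using pos[of y] by simp
  then show "\<exists>d. (one_sided_gap \<theta> has_real_derivative d) (at x) \<and> 0 \<le> d"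
    using one_sided_gap_deriv[of \<theta> x] by (intro exI[of _ "\<alpha> * g x - g (x - \<theta>)"]) simp
qed

end

section \<open>Coverage, given the limit \<open>a\<close> of the upper endpoint\<close>

locale hpd_coverage = hpd_interval +
  fixes a :: real
  assumes a_lim: "(up g \<alpha> \<longlongrightarrow> a) at_bot"
begin

text \<open>Since \<open>up\<close> is nondecreasing and positive, its limit \<open>a\<close> is a nonnegative lower bound.\<close>

lemma a_le_up: "a \<le> up g \<alpha> x"
proof (rule tendsto_upperbound[OF a_lim])
  show "eventually (\<lambda>y. up g \<alpha> y \<le> up g \<alpha> x) at_bot"
    unfolding eventually_at_bot_linorder by (intro exI[of _ x]) (auto intro: up_mono)
qed simp

lemma a_nonneg: "0 \<le> a"
  by (rule tendsto_lowerbound[OF a_lim]) (auto intro: always_eventually less_imp_le up_pos)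

lemma upper_region: assumes "a < \<theta>" shows "{x. \<theta> \<le> up g \<alpha> x} = {up_inv g \<alpha> \<theta>..}"
proof -
  have "eventually (\<lambda>y. up g \<alpha> y < \<theta>) at_bot" using a_lim assms by (rule order_tendstoD(2))
  then obtain x0 where x0: "\<And>y. y \<le> x0 \<Longrightarrow> up g \<alpha> y < \<theta>"
    by (auto simp: eventually_at_bot_linorder)
  have "x0 \<le> x" if "\<theta> \<le> up g \<alpha> x" for x
    using that x0[of x] by fastforce
  then have "bdd_below {x. \<theta> \<le> up g \<alpha> x}" by (intro bdd_belowI) auto
  moreover have "max \<theta> D0 + 1 \<le> up g \<alpha> (max \<theta> D0 + 1)" by (rule up_ge_self) simp
  then have "max \<theta> D0 + 1 \<in> {x. \<theta> \<le> up g \<alpha> x}" by simp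
  ultimately show ?thesis
    using closed_upset_eq_atLeast[OF upper_region_closed] up_mono order_trans
    by (simp add: up_inv_def) blast
qed

lemma le_up_iff: "a < \<theta> \<Longrightarrow> \<theta> \<le> up g \<alpha> x \<longleftrightarrow> up_inv g \<alpha> \<theta> \<le> x"
  using upper_region by (metis atLeast_iff mem_Collect_eq)

lemma a_less_2d0: "a < 2 * D0"
proof -
  obtain d where "d > 0" "\<forall>h. 0 < h \<and> h < d \<longrightarrow> up g \<alpha> (D0 - h) < 2 * D0"
    using up_less_2d0_left by blast
  then have "up g \<alpha> (D0 - d/2) < 2 * D0" by simp
  then show ?thesis using a_le_up[of "D0 - d/2"] by simp
qed

lemma up_inv_2d0: "up_inv g \<alpha> (2 * D0) = D0"
proof -
  obtain d where d: "d > 0" "\<forall>h. 0 < h \<and> h < d \<longrightarrow> up g \<alpha> (D0 - h) < 2 * D0"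
    using up_less_2d0_left by blast
  have left: "\<not> up_inv g \<alpha> (2 * D0) \<le> D0 - h" if "0 < h" "h < d" for h
    using d that le_up_iff[OF a_less_2d0, of "D0 - h"] by auto
  have "D0 \<le> up_inv g \<alpha> (2 * D0)"
  proof (rule ccontr)
    define h where "h = min (d/2) (D0 - up_inv g \<alpha> (2 * D0))"
    assume "\<not> D0 \<le> up_inv g \<alpha> (2 * D0)"
    then have "0 < h" "h < d" "up_inv g \<alpha> (2 * D0) \<le> D0 - h"
      using d(1) by (auto simp: h_def)
    then show False using left by blast
  qed
  then show ?thesis using le_up_iff[OF a_less_2d0, of D0] up_d0 by simp
qed

lemma up_inv_ge_d0: assumes "2 * D0 \<le> \<theta>" shows "D0 \<le> up_inv g \<alpha> \<theta>"
proof (rule ccontr)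
  assume "\<not> D0 \<le> up_inv g \<alpha> \<theta>"
  then have "up g \<alpha> (up_inv g \<alpha> \<theta>) \<le> 2 * D0" using up_mono[of _ D0] up_d0 by simp
  moreover have "\<theta> \<le> up g \<alpha> (up_inv g \<alpha> \<theta>)" using assms a_less_2d0 le_up_iff by simp
  ultimately have "\<theta> = 2 * D0" using assms by simp
  then show False using \<open>\<not> D0 \<le> up_inv g \<alpha> \<theta>\<close> up_inv_2d0 by simp
qed

lemma up_inv_le_d0: "a < \<theta> \<Longrightarrow> \<theta> \<le> 2 * D0 \<Longrightarrow> up_inv g \<alpha> \<theta> \<le> D0"
  using le_up_iff[of \<theta> D0] up_d0 by simp

end

context hpd_coverage
begin

lemma xx0_equation:
  assumes "a < \<theta>" "\<theta> \<le> 2 * D0"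
  shows "cdf g (xx0 g \<alpha> \<theta>) = \<alpha> * cdf g (xx0 g \<alpha> \<theta> + \<theta>)"
proof -
  let ?c = "up_inv g \<alpha> \<theta>"
  have c_le: "?c \<le> D0" using up_inv_le_d0[OF assms] .
  have "one_sided_gap \<theta> ?c \<le> 0"
    using up_ge_iff_gap[OF c_le, of \<theta>] le_up_iff[OF assms(1), of ?c] by simp
  moreover have "\<not> one_sided_gap \<theta> ?c < 0"
  proof
    assume "one_sided_gap \<theta> ?c < 0"
    then obtain y where "y < ?c" "one_sided_gap \<theta> y < 0"
      using isCont_less_left[OF one_sided_gap_isCont] by blast
    then show False using up_ge_iff_gap[of y \<theta>] le_up_iff[OF assms(1), of y] c_le by simp
  qed
  ultimately show ?thesis by (simp add: one_sided_gap_def xx0_def)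
qed

lemma cdf_up_inv_right:
  assumes "2 * D0 \<le> \<theta>"
  shows "cdf g (\<theta> - up_inv g \<alpha> \<theta>) = two_sided_level (up_inv g \<alpha> \<theta>)"
proof -
  let ?c = "up_inv g \<alpha> \<theta>"
  have at: "a < \<theta>" using assms a_less_2d0 by simp
  have c_ge: "D0 \<le> ?c" using up_inv_ge_d0[OF assms] .
  have "cdf g (\<theta> - ?c) \<le> two_sided_level ?c"
    using up_ge_iff_right[OF c_ge, of \<theta>] le_up_iff[OF at, of ?c] by simp
  moreover have "\<not> cdf g (\<theta> - ?c) - two_sided_level ?c < 0"
  proof
    assume lt: "cdf g (\<theta> - ?c) - two_sided_level ?c < 0"
    have c_gt: "D0 < ?c"
    proof (rule ccontr)
      assume "\<not> D0 < ?c"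
      then have "cdf g (\<theta> - D0) < cdf g D0" using lt c_ge two_sided_level_d0 by simp
      then show False using assms by (simp add: cdf_less_iff)
    qed
    have cont: "isCont (\<lambda>x. cdf g (\<theta> - x) - two_sided_level x) ?c"
      by (intro continuous_intros cdf_comp_isCont cdf_isCont)
    obtain d where d: "d > 0"
        "\<And>y. \<bar>y - ?c\<bar> < d \<Longrightarrow> cdf g (\<theta> - y) - two_sided_level y < 0"
      using isCont_less_nearby[OF cont lt] by blast
    define y where "y = max (?c - d/2) D0"
    have y: "D0 \<le> y" "y < ?c" "\<bar>y - ?c\<bar> < d" using c_gt d(1) by (auto simp: y_def)
    then have "\<theta> \<le> up g \<alpha> y" using up_ge_iff_right[OF y(1)] d(2)[OF y(3)] by simp
    then show False using le_up_iff[OF at, of y] y(2) by simp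
  qed
  ultimately show ?thesis by simp
qed

lemma xx2_equation:
  "2 * D0 \<le> \<theta> \<Longrightarrow> 1 - 2 * cdf g (xx2 g \<alpha> \<theta>) = (1 - \<alpha>) * cdf g (xx2 g \<alpha> \<theta> + \<theta>)"
  using cdf_up_inv_right[of \<theta>] cdf_symmetric[of "up_inv g \<alpha> \<theta> - \<theta>"]
  by (simp add: xx2_def field_simps)

text \<open>Monotonicity of \<open>x\<^sub>0\<close> and \<open>x\<^sub>2\<close>: translating the boundary point of \<open>\<theta>\<close> by the
  shift \<open>s - t\<close> stays in the upper region of \<open>s\<close>.\<close>

lemma xx0_mono:
  assumes "a < s" "s \<le> t" "t \<le> 2 * D0" shows "xx0 g \<alpha> s \<le> xx0 g \<alpha> t"
proof -
  have at: "a < t" using assms by simp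
  define z where "z = up_inv g \<alpha> t - t"
  have ct: "z + t \<le> D0" using up_inv_le_d0[OF at assms(3)] by (simp add: z_def)
  have "\<alpha> * cdf g (z + s) \<le> \<alpha> * cdf g (z + t)"
    using assms alpha by (intro mult_left_mono cdf_mono) auto
  also have "\<dots> = cdf g z" using xx0_equation[OF at assms(3)] by (simp add: z_def xx0_def)
  finally have "s \<le> up g \<alpha> (z + s)" using up_ge_iff_left[of "z + s" s] ct assms by simp
  then show ?thesis using le_up_iff[OF assms(1)] by (simp add: xx0_def z_def)
qed

lemma xx2_mono:
  assumes "2 * D0 \<le> s" "s \<le> t" shows "xx2 g \<alpha> t \<le> xx2 g \<alpha> s"
proof -
  have at: "a < t" using assms a_less_2d0 by simp
  define w where "w = up_inv g \<alpha> s + (t - s)"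
  have w: "D0 \<le> w" "up_inv g \<alpha> s \<le> w" using up_inv_ge_d0[OF assms(1)] assms by (auto simp: w_def)
  have "cdf g (t - w) \<le> two_sided_level w"
    using cdf_up_inv_right[OF assms(1)] two_sided_level_mono[OF w(2)] by (simp add: w_def)
  then have "t \<le> up g \<alpha> w" using up_ge_iff_right[OF w(1)] by simp
  then show ?thesis using le_up_iff[OF at] by (simp add: xx2_def w_def)
qed

text \<open>Since \<open>up 0 = d\<^sub>1\<close> only
  \<open>u\<^sup>-\<^sup>1(d\<^sub>1) < 0\<close> has to be excluded.  Then the gap for \<open>d\<^sub>1\<close> would vanish on
  \<open>[u\<^sup>-\<^sup>1(d\<^sub>1), 0]\<close>, giving a critical point there, hence it would be \<open>\<le> 0\<close> on
  the whole left half-line and \<open>a \<ge> d\<^sub>1\<close>.\<close>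

lemma up_inv_d1: assumes "a < D1" shows "up_inv g \<alpha> D1 = 0"
proof (rule ccontr)
  let ?c = "up_inv g \<alpha> D1"
  assume "?c \<noteq> 0"
  moreover have "?c \<le> 0" using le_up_iff[OF assms, of 0] up_0 by simp
  ultimately have c_neg: "?c < 0" by simp
  have gap_zero: "one_sided_gap D1 x = 0" if "?c \<le> x" "x \<le> 0" for x
    using le_up_iff[OF assms, of x] up_ge_iff_gap[of x D1] one_sided_gap_d1_nonneg[of x] that d0_pos
    by simp
  define y0 where "y0 = ?c / 2"
  have "\<alpha> * g y0 - g (y0 - D1) = 0"
  proof (rule DERIV_local_const[OF one_sided_gap_deriv, of "- ?c / 2"])
    show "0 < - ?c / 2" using c_neg by simp
    show "\<forall>y. \<bar>y0 - y\<bar> < - ?c / 2 \<longrightarrow> one_sided_gap D1 y0 = one_sided_gap D1 y"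
      using gap_zero c_neg by (auto simp: y0_def abs_less_iff)
  qed
  then have "one_sided_gap D1 z \<le> one_sided_gap D1 y0" if "z \<le> y0" for z
    using one_sided_gap_le_critical[OF _ _ that] d1_pos by simp
  then have "D1 \<le> up g \<alpha> z" if "z \<le> y0" for z
    using that gap_zero[of y0] up_ge_iff_gap[of z D1] c_neg d0_pos by (simp add: y0_def)
  then have "D1 \<le> a"
    by (intro tendsto_lowerbound[OF a_lim]) (auto simp: eventually_at_bot_linorder)
  then show False using assms by simp
qed

text \<open>\<open>x\<^sub>2 \<rightarrow> -d\<^sub>1\<close>: equation (iii) forces \<open>G(x\<^sub>2) > \<alpha>/2 = G(-d\<^sub>1)\<close>, and any fixed
  \<open>z > -d\<^sub>1\<close> eventually violates it.\<close>

lemma xx2_at_top: "(xx2 g \<alpha> \<longlongrightarrow> - D1) at_top"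
proof (rule order_tendstoI)
  fix lower assume lower: "lower < - D1"
  show "eventually (\<lambda>\<theta>. lower < xx2 g \<alpha> \<theta>) at_top"
    using eventually_ge_at_top[of "2 * D0"]
  proof eventually_elim
    case (elim \<theta>)
    have "(1 - \<alpha>) * cdf g (xx2 g \<alpha> \<theta> + \<theta>) < (1 - \<alpha>) * 1"
      using alpha cdf_less_1 by (intro mult_strict_left_mono) auto
    then have "cdf g (- D1) < cdf g (xx2 g \<alpha> \<theta>)"
      using xx2_equation[OF elim] cdf_neg_d1 by simp
    then show ?case using lower by (simp add: cdf_less_iff)
  qed
next
  fix upper assume upper: "- D1 < upper"
  define z where "z = (upper - D1) / 2"
  have z: "- D1 < z" "z < upper" using upper by (auto simp: z_def)
  have "((\<lambda>\<theta>. (1 - \<alpha>) * cdf g (z + \<theta>)) \<longlongrightarrow> (1 - \<alpha>) * 1) at_top"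
    using cdf_shift_at_top[of z] by (intro tendsto_intros) (simp add: add.commute)
  moreover have "1 - 2 * cdf g z < (1 - \<alpha>) * 1"
    using cdf_strict_mono[OF z(1)] cdf_neg_d1 by simp
  ultimately have "eventually (\<lambda>\<theta>. 1 - 2 * cdf g z < (1 - \<alpha>) * cdf g (z + \<theta>)) at_top"
    by (rule order_tendstoD(1))
  with eventually_ge_at_top[of "2 * D0"]
  show "eventually (\<lambda>\<theta>. xx2 g \<alpha> \<theta> < upper) at_top"
  proof eventually_elim
    case (elim \<theta>)
    show ?case
    proof (rule ccontr)
      assume "\<not> xx2 g \<alpha> \<theta> < upper"
      then have zx: "z \<le> xx2 g \<alpha> \<theta>" using z by simp
      have "(1 - \<alpha>) * cdf g (z + \<theta>) \<le> (1 - \<alpha>) * cdf g (xx2 g \<alpha> \<theta> + \<theta>)"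
        using zx alpha by (intro mult_left_mono cdf_mono) auto
      also have "\<dots> = 1 - 2 * cdf g (xx2 g \<alpha> \<theta>)" using xx2_equation[OF elim(1)] by simp
      also have "\<dots> \<le> 1 - 2 * cdf g z" using cdf_mono[OF zx] by simp
      finally show False using elim(2) by simp
    qed
  qed
qed

lemma coverage_below_a:
  assumes "0 \<le> \<theta>" "\<theta> \<le> a" shows "coverage g \<alpha> \<theta> = cdf g (xx1 g \<alpha> \<theta>)"
proof -
  have "{x. lo g \<alpha> x \<le> \<theta> \<and> \<theta> \<le> up g \<alpha> x} = {..lo_inv g \<alpha> \<theta>}"
    using lo_le_iff_le_lo_inv[OF assms(1)] a_le_up assms(2) by (auto intro: order_trans)
  then show ?thesis unfolding coverage_def using measure_shift_atMost by (simp add: xx1_def)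
qed

lemma coverage_above_a:
  assumes "a < \<theta>" shows "coverage g \<alpha> \<theta> = cdf g (xx1 g \<alpha> \<theta>) - cdf g (xx0 g \<alpha> \<theta>)"
proof -
  have th: "0 \<le> \<theta>" using a_nonneg assms by simp
  let ?r = "lo_inv g \<alpha> \<theta>" and ?c = "up_inv g \<alpha> \<theta>"
  have "{x. lo g \<alpha> x \<le> \<theta> \<and> \<theta> \<le> up g \<alpha> x} = {..?r} - {..<?c}"
    using lo_le_iff_le_lo_inv[OF th] le_up_iff[OF assms] by auto
  moreover have "?c \<le> ?r" using le_up_iff[OF assms] lo_inv_below_up[OF th] by simp
  then have "measure (density lborel (\<lambda>x. ennreal (g (x - \<theta>)))) ({..?r} - {..<?c})
      = cdf g (?r - \<theta>) - cdf g (?c - \<theta>)"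
    using emeasure_shift_atMost measure_shift_atMost measure_shift_lessThan
    by (subst measure_Diff) auto
  ultimately show ?thesis unfolding coverage_def by (simp add: xx1_def xx0_def)
qed

end

text \<open>If \<open>g\<close> vanished somewhere it would vanish on a left half-line (symmetry and
  unimodality); there \<open>G = 0\<close> and \<open>up x = x - qf g 0\<close>, which has no finite limit
  at \<open>-\<infinity>\<close>.  So the existence of \<open>a\<close> forces \<open>g > 0\<close>.\<close>

lemma density_positive_if_up_converges:
  fixes g :: "real \<Rightarrow> real" and \<alpha> a :: real
  assumes nonneg: "\<And>x. 0 \<le> g x"
    and symm: "\<And>z. g (- z) = g z"
    and unimodal: "\<And>x y. 0 \<le> x \<Longrightarrow> x \<le> y \<Longrightarrow> g y \<le> g x"
    and a_lim: "(up g \<alpha> \<longlongrightarrow> a) at_bot"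
  shows "0 < g x"
proof (rule ccontr)
  assume "\<not> 0 < g x"
  then have "g \<bar>x\<bar> = 0" using nonneg[of x] symm[of x] by (cases "0 \<le> x") auto
  then have vanish: "g t = 0" if "t \<le> - \<bar>x\<bar>" for t
    using unimodal[of "\<bar>x\<bar>" "- t"] that symm[of t] nonneg[of t] by simp
  have "cdf g y = 0" if "y \<le> - \<bar>x\<bar>" for y
  proof -
    have "(\<lambda>t. indicator {..y} t *\<^sub>R g t) = (\<lambda>t. 0)"
      using vanish that by (auto simp: fun_eq_iff split: split_indicator)
    then show ?thesis unfolding cdf_def set_lebesgue_integral_def by simp
  qed
  then have up_left: "up g \<alpha> y = y - qf g 0" if "y \<le> min (d0 g \<alpha>) (- \<bar>x\<bar>)" for y
    using that by (simp add: up_def)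
  have "eventually (\<lambda>y. a - 1 < up g \<alpha> y) at_bot" using a_lim by (rule order_tendstoD(1)) simp
  then obtain N where N: "\<And>y. y \<le> N \<Longrightarrow> a - 1 < up g \<alpha> y"
    by (auto simp: eventually_at_bot_linorder)
  define y where "y = min (min N (min (d0 g \<alpha>) (- \<bar>x\<bar>))) (a - 2 + qf g 0)"
  have "y \<le> N" "y \<le> min (d0 g \<alpha>) (- \<bar>x\<bar>)" "y \<le> a - 2 + qf g 0" by (auto simp: y_def)
  then show False using N[of y] up_left[of y] by simp
qed

theorem lemma5:
  fixes g :: "real \<Rightarrow> real" and \<alpha> a :: real
  assumes meas: "g \<in> borel_measurable borel"
    and nonneg: "\<And>x. 0 \<le> g x"
    and integ: "integrable lborel g"
    and total: "(LINT x|lborel. g x) = 1"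
    and symm: "\<And>z. g (- z) = g z"
    and unimodal: "\<And>x y. 0 \<le> x \<Longrightarrow> x \<le> y \<Longrightarrow> g y \<le> g x"
    and logconc: "\<And>x y t. 0 < g x \<Longrightarrow> 0 < g y \<Longrightarrow> 0 \<le> t \<Longrightarrow> t \<le> 1 \<Longrightarrow>
                    t * ln (g x) + (1 - t) * ln (g y) \<le> ln (g (t * x + (1 - t) * y))"
    and alpha: "0 < \<alpha>" "\<alpha> < 1"
    and a_lim: "(up g \<alpha> \<longlongrightarrow> a) at_bot"
  shows
   "(\<forall>\<theta>. 0 \<le> \<theta> \<and> \<theta> \<le> a \<longrightarrow> coverage g \<alpha> \<theta> = cdf g (xx1 g \<alpha> \<theta>)) \<and>
    (\<forall>\<theta>. a < \<theta> \<and> \<theta> \<le> 2 * d0 g \<alpha> \<longrightarrow>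
        coverage g \<alpha> \<theta> = cdf g (xx1 g \<alpha> \<theta>) - cdf g (xx0 g \<alpha> \<theta>)) \<and>
    (\<forall>\<theta>. 2 * d0 g \<alpha> < \<theta> \<longrightarrow>
        coverage g \<alpha> \<theta> = cdf g (xx1 g \<alpha> \<theta>) - cdf g (xx2 g \<alpha> \<theta>)) \<and>
    (\<forall>\<theta>. a < \<theta> \<and> \<theta> \<le> 2 * d0 g \<alpha> \<longrightarrow>
        cdf g (xx0 g \<alpha> \<theta>) = \<alpha> * cdf g (xx0 g \<alpha> \<theta> + \<theta>)) \<and>
    (\<forall>\<theta>. 0 \<le> \<theta> \<longrightarrow>
        2 * cdf g (xx1 g \<alpha> \<theta>) - 1 = (1 - \<alpha>) * cdf g (xx1 g \<alpha> \<theta> + \<theta>)) \<and>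
    (\<forall>\<theta>. 2 * d0 g \<alpha> \<le> \<theta> \<longrightarrow>
        1 - 2 * cdf g (xx2 g \<alpha> \<theta>) = (1 - \<alpha>) * cdf g (xx2 g \<alpha> \<theta> + \<theta>)) \<and>
    (\<forall>s t. a < s \<and> s \<le> t \<and> t \<le> 2 * d0 g \<alpha> \<longrightarrow> xx0 g \<alpha> s \<le> xx0 g \<alpha> t) \<and>
    (\<forall>s t. 0 \<le> s \<and> s \<le> t \<longrightarrow> xx1 g \<alpha> s \<le> xx1 g \<alpha> t) \<and>
    (\<forall>s t. 2 * d0 g \<alpha> \<le> s \<and> s \<le> t \<longrightarrow> xx2 g \<alpha> t \<le> xx2 g \<alpha> s) \<and>
    xx0 g \<alpha> (2 * d0 g \<alpha>) = - d0 g \<alpha> \<and>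
    xx2 g \<alpha> (2 * d0 g \<alpha>) = - d0 g \<alpha> \<and>
    (a < d1 g \<alpha> \<longrightarrow> xx0 g \<alpha> (d1 g \<alpha>) = - d1 g \<alpha>) \<and>
    (xx1 g \<alpha> \<longlongrightarrow> d0 g \<alpha>) (at_right 0) \<and>
    (xx1 g \<alpha> \<longlongrightarrow> d1 g \<alpha>) at_top \<and>
    (xx2 g \<alpha> \<longlongrightarrow> - d1 g \<alpha>) at_top"
proof -
  have "\<And>x. 0 < g x" by (rule density_positive_if_up_converges[OF nonneg symm unimodal a_lim])
  then interpret hpd_coverage g \<alpha> a
    using meas integ total symm unimodal logconc alpha a_lim by unfold_locales
  have "xx2 g \<alpha> = xx0 g \<alpha>" by (simp add: fun_eq_iff xx0_def xx2_def)
  then show ?thesis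
    using a_less_2d0 up_inv_2d0 up_inv_d1
      coverage_below_a coverage_above_a xx0_equation xx1_equation xx2_equation
      xx0_mono xx1_mono xx2_mono xx1_at_right_0 xx1_at_top xx2_at_top
    by (auto simp: xx0_def)
qed

end
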